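(* Let $k$ be an algebraically closed field and $\alpha,\beta,\gamma$ partitions. (1) For $f,g\in V_{\alpha,\gamma}^\beta(k)$, the relation $(N_\alpha,N_\beta,f)\leq_{\rm deg}(N_\alpha,N_\beta,g)$ holds if and only if $G_g(k)$ is contained in the closure of $G_f(k)$ in $M_\alpha^\beta(k)$. (2) If $\Gamma$ is an LR-tableau of type $(\alpha,\beta,\gamma)$ and $f,g\in V_\Gamma(k)$, then $(N_\alpha,N_\beta,f)\leq_{\rm deg}(N_\alpha,N_\beta,g)$ (degeneration within $V_\Gamma(k)$) holds if and only if $G_g(k)$ is contained in the closure of $G_f(k)$ in $M_\alpha^\beta(k)$.
   Context: For a partition $\alpha$ let $N_\alpha=\bigoplus_ik[T]/(T^{\alpha_i})$. $H_\alpha^\beta(k)=\operatorname{Hom}_k(N_\alpha,N_\beta)$ is an affine space with Zariski topology; $M_\alpha^\beta(k)\subseteq H_\alpha^\beta(k)$ is the closed subset of $k[T]$-homomorphisms; $V_{\alpha,\gamma}^\beta(k)$ is the subset of injective $k[T]$-homomorphisms $f$ with $\operatorname{Coker}f\cong N_\gamma$. The group $\operatorname{Aut}_{k[T]}(N_\alpha)\times\operatorname{Aut}_{k[T]}(N_\beta)$ acts by $(a,h)\cdot f=hfa^{-1}$; $G_f(k)$ is the orbit of $f$. $(N_\alpha,N_\beta,f)\leq_{\rm deg}(N_\alpha,N_\beta,g)$ means $G_g(k)$ lies in the closure of $G_f(k)$ in $V_{\alpha,\gamma}^\beta(k)$ (induced topology). For an LR-tableau $\Gamma$ of type $(\alpha,\beta,\gamma)$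 (a skew Young tableau of shape $\beta\setminus\gamma$ with content determined by $\alpha$ satisfying the Littlewood–Richardson conditions), $V_\Gamma(k)\subseteq V_{\alpha,\gamma}^\beta(k)$ is the set of $f$ whose associated LR-tableau (the tableau recording, for each $i$, the shape of the module $N_\beta/T^i f(N_\alpha)$) is $\Gamma$; it is a union of orbits, and degeneration within $V_\Gamma(k)$ means containment in the closure within $V_\Gamma(k)$. *)

theory Defs
  imports "HOL-Analysis.Analysis" "HOL-Computational_Algebra.Polynomial"
begin

definition is_partition :: "nat list \<Rightarrow> bool" where
  "is_partition l \<longleftrightarrow> sorted_wrt (\<ge>) l \<and> 0 \<notin> set l"

definition part :: "nat list \<Rightarrow> nat \<Rightarrow> nat" where
  "part l r = (if r < length l then l ! r else 0)"

text \<open>Basis of N_lambda = direct sum of k[T]/(T^lambda_i): the element (i,j) stands for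
  T^j e_i, with j < lambda_i.\<close>
definition bas :: "nat list \<Rightarrow> (nat \<times> nat) set" where
  "bas l = {(i, j). i < length l \<and> j < l ! i}"

text \<open>Elements of N_lambda as coordinate vectors over the basis.\<close>
definition Nmod :: "nat list \<Rightarrow> (nat \<times> nat \<Rightarrow> 'k::field) set" where
  "Nmod l = {v. \<forall>x. x \<notin> bas l \<longrightarrow> v x = 0}"

text \<open>Action of T on N_lambda: T (T^j e_i) = T^(j+1) e_i, which is 0 if j+1 = lambda_i.\<close>
definition Tact :: "nat list \<Rightarrow> (nat \<times> nat \<Rightarrow> 'k::field) \<Rightarrow> (nat \<times> nat \<Rightarrow> 'k)" where
  "Tact l v = (\<lambda>(i, j). if (i, j) \<in> bas l \<and> 0 < j then v (i, j - 1) else 0)"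

definition aff :: "'c set \<Rightarrow> ('c \<Rightarrow> 'k::field) set" where
  "aff I = {m. \<forall>c. c \<notin> I \<longrightarrow> m c = 0}"

inductive_set poly_fun :: "'c set \<Rightarrow> (('c \<Rightarrow> 'k::field) \<Rightarrow> 'k) set" for I where
  const: "(\<lambda>m. a) \<in> poly_fun I"
| coord: "c \<in> I \<Longrightarrow> (\<lambda>m. m c) \<in> poly_fun I"
| add: "p \<in> poly_fun I \<Longrightarrow> q \<in> poly_fun I \<Longrightarrow> (\<lambda>m. p m + q m) \<in> poly_fun I"
| mult: "p \<in> poly_fun I \<Longrightarrow> q \<in> poly_fun I \<Longrightarrow> (\<lambda>m. p m * q m) \<in> poly_fun I"

definition zariski_closed :: "'c set \<Rightarrow> ('c \<Rightarrow> 'k::field) set \<Rightarrow> bool" where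
  "zariski_closed I Z \<longleftrightarrow> (\<exists>P. P \<subseteq> poly_fun I \<and> Z = {m \<in> aff I. \<forall>p\<in>P. p m = 0})"

definition zariski :: "'c set \<Rightarrow> ('c \<Rightarrow> 'k::field) topology" where
  "zariski I = topology (\<lambda>U. U \<subseteq> aff I \<and> zariski_closed I (aff I - U))"

text \<open>Coordinates of H_alpha^beta: a k-linear map N_alpha \<rightarrow> N_beta is its matrix
  m((y,x)) for y in the basis of N_beta and x in the basis of N_alpha.\<close>
definition Hidx :: "nat list \<Rightarrow> nat list \<Rightarrow> ((nat \<times> nat) \<times> (nat \<times> nat)) set" where
  "Hidx a b = bas b \<times> bas a"

definition Hspace :: "nat list \<Rightarrow> nat list \<Rightarrow> ((nat \<times> nat) \<times> (nat \<times> nat) \<Rightarrow> 'k::field) set" where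
  "Hspace a b = aff (Hidx a b)"

definition mapply :: "nat list \<Rightarrow> ((nat \<times> nat) \<times> (nat \<times> nat) \<Rightarrow> 'k::field)
    \<Rightarrow> (nat \<times> nat \<Rightarrow> 'k) \<Rightarrow> (nat \<times> nat \<Rightarrow> 'k)" where
  "mapply a m v = (\<lambda>y. \<Sum>x\<in>bas a. m (y, x) * v x)"

definition mcomp :: "nat list \<Rightarrow> ((nat \<times> nat) \<times> (nat \<times> nat) \<Rightarrow> 'k::field)
    \<Rightarrow> ((nat \<times> nat) \<times> (nat \<times> nat) \<Rightarrow> 'k) \<Rightarrow> ((nat \<times> nat) \<times> (nat \<times> nat) \<Rightarrow> 'k)" where
  "mcomp b m1 m2 = (\<lambda>(y, x). \<Sum>z\<in>bas b. m1 (y, z) * m2 (z, x))"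

definition Mspace :: "nat list \<Rightarrow> nat list \<Rightarrow> ((nat \<times> nat) \<times> (nat \<times> nat) \<Rightarrow> 'k::field) set" where
  "Mspace a b = {m \<in> Hspace a b.
     \<forall>v\<in>Nmod a. mapply a m (Tact a v) = Tact b (mapply a m v)}"

text \<open>N_b / U is isomorphic to N_c (U a submodule): there is a surjective
  k[T]-homomorphism N_b \<rightarrow> N_c with kernel U.\<close>
definition quot_iso :: "nat list \<Rightarrow> (nat \<times> nat \<Rightarrow> 'k::field) set \<Rightarrow> nat list \<Rightarrow> bool" where
  "quot_iso b U c \<longleftrightarrow> (\<exists>p \<in> Mspace b c. mapply b p ` Nmod b = Nmod c
        \<and> {v \<in> Nmod b. mapply b p v = (\<lambda>_. 0)} = U)"

definition Vspace :: "nat list \<Rightarrow> nat list \<Rightarrow> nat list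
    \<Rightarrow> ((nat \<times> nat) \<times> (nat \<times> nat) \<Rightarrow> 'k::field) set" where
  "Vspace a c b = {f \<in> Mspace a b. inj_on (mapply a f) (Nmod a)
       \<and> quot_iso b (mapply a f ` Nmod a) c}"

definition Aut :: "nat list \<Rightarrow> ((nat \<times> nat) \<times> (nat \<times> nat) \<Rightarrow> 'k::field) set" where
  "Aut a = {m \<in> Mspace a a. bij_betw (mapply a m) (Nmod a) (Nmod a)}"

text \<open>Orbit G_f = {h f a^{-1} | a \<in> Aut N_alpha, h \<in> Aut N_beta}; as a ranges over the
  group Aut N_alpha so does a^{-1}.\<close>
definition orbit :: "nat list \<Rightarrow> nat list \<Rightarrow> ((nat \<times> nat) \<times> (nat \<times> nat) \<Rightarrow> 'k::field)
    \<Rightarrow> ((nat \<times> nat) \<times> (nat \<times> nat) \<Rightarrow> 'k) set" where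
  "orbit a b f = {mcomp b h (mcomp a f a') | a' h. a' \<in> Aut a \<and> h \<in> Aut b}"

text \<open>(N_a, N_b, f) \<le>_deg (N_a, N_b, g) relative to an ambient subset X of H_a^b:
  G_g lies in the closure of G_f in X with the induced Zariski topology.\<close>
definition deg_le_in :: "nat list \<Rightarrow> nat list \<Rightarrow> ((nat \<times> nat) \<times> (nat \<times> nat) \<Rightarrow> 'k::field) set
    \<Rightarrow> ((nat \<times> nat) \<times> (nat \<times> nat) \<Rightarrow> 'k) \<Rightarrow> ((nat \<times> nat) \<times> (nat \<times> nat) \<Rightarrow> 'k) \<Rightarrow> bool" where
  "deg_le_in a b X f g \<longleftrightarrow>
     orbit a b g \<subseteq> (subtopology (zariski (Hidx a b)) X) closure_of (orbit a b f)"

text \<open>An LR-tableau is encoded by the chain of partitions Gamma 0 \<subseteq> Gamma 1 \<subseteq> ...,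
  where the boxes of Gamma (l) minus Gamma (l-1) carry the entry l.
  Type (alpha, beta, gamma): Gamma 0 = gamma, eventually Gamma l = beta, each step a
  horizontal strip, the number of entries l is the number of parts of alpha that are \<ge> l,
  and the lattice permutation condition holds.\<close>
definition entries :: "(nat \<Rightarrow> nat list) \<Rightarrow> nat \<Rightarrow> nat \<Rightarrow> nat" where
  "entries G l r = part (G l) r - part (G (l - 1)) r"

definition is_LR_tableau :: "nat list \<Rightarrow> nat list \<Rightarrow> nat list \<Rightarrow> (nat \<Rightarrow> nat list) \<Rightarrow> bool" where
  "is_LR_tableau a b c G \<longleftrightarrow>
     (\<forall>l. is_partition (G l)) \<and> G 0 = c \<and> (\<exists>n. \<forall>l\<ge>n. G l = b)
   \<and> (\<forall>l r. part (G l) r \<le> part (G (Suc l)) r)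
   \<and> (\<forall>l r. part (G (Suc l)) (Suc r) \<le> part (G l) r)
   \<and> (\<forall>l. sum_list (G (Suc l)) - sum_list (G l) = card {i. i < length a \<and> Suc l \<le> a ! i})
   \<and> (\<forall>l r. 2 \<le> l \<longrightarrow> (\<Sum>s\<le>r. entries G l s) \<le> (\<Sum>s<r. entries G (l - 1) s))"

definition VGamma :: "nat list \<Rightarrow> nat list \<Rightarrow> nat list \<Rightarrow> (nat \<Rightarrow> nat list)
    \<Rightarrow> ((nat \<times> nat) \<times> (nat \<times> nat) \<Rightarrow> 'k::field) set" where
  "VGamma a c b G = {f \<in> Vspace a c b. \<forall>i. is_partition (G i)
       \<and> quot_iso b ((Tact b ^^ i) ` mapply a f ` Nmod a) (G i)}"

end

theory Submission
  imports Defs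
begin

text \<open>Both equivalences hold because V and V_Gamma are unions of orbits inside M: for a subset S
  of a subspace X, the closure of S in X is X intersected with its closure in the ambient
  space; as the orbit of g lies in X too, it lies in one closure iff it lies in the other.
  That V_Gamma (and V) is stable under the group action comes from transporting the
  cokernel isomorphism N_beta / T^i f(N_alpha) = N_(Gamma i) along an automorphism of N_beta.\<close>

lemma finite_bas: "finite (bas l)"
proof -
  have "bas l = Sigma {..<length l} (\<lambda>i. {..<l ! i})" by (auto simp: bas_def)
  then show ?thesis by simp
qed

lemma mapply_mcomp: "mapply a (mcomp b m1 m2) v = mapply b m1 (mapply a m2 v)"
  unfolding mapply_def mcomp_def
  by (rule ext) (simp add: sum_distrib_left sum_distrib_right mult.assoc sum.swap[of _ "bas a"])

lemma mapply_sum: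
  "mapply a m (\<lambda>x. \<Sum>z\<in>A. c z * u z x) = (\<lambda>y. \<Sum>z\<in>A. c z * mapply a m (u z) y)"
  unfolding mapply_def
  by (rule ext) (simp add: sum_distrib_left mult.left_commute sum.swap[of _ A])

lemma mapply_in_Nmod: "m \<in> Hspace a b \<Longrightarrow> mapply a m v \<in> Nmod b"
  unfolding Hspace_def aff_def Hidx_def Nmod_def mapply_def
  by (auto intro!: sum.neutral)

lemma Mspace_mapply_in_Nmod: "m \<in> Mspace a b \<Longrightarrow> mapply a m v \<in> Nmod b"
  by (simp add: Mspace_def mapply_in_Nmod)

lemma Mspace_mapply_Tact:
  "m \<in> Mspace a b \<Longrightarrow> v \<in> Nmod a \<Longrightarrow> mapply a m (Tact a v) = Tact b (mapply a m v)"
  by (simp add: Mspace_def)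

lemma Tact_in_Nmod: "Tact l v \<in> Nmod l"
  unfolding Nmod_def Tact_def by auto

lemma Tact_pow_in_Nmod: "w \<in> Nmod l \<Longrightarrow> (Tact l ^^ i) w \<in> Nmod l"
  by (cases i) (auto simp: Tact_in_Nmod)

lemma Mspace_mapply_Tact_pow:
  assumes "m \<in> Mspace a b" and "w \<in> Nmod a"
  shows "(Tact b ^^ i) (mapply a m w) = mapply a m ((Tact a ^^ i) w)"
  by (induction i) (simp_all add: assms Mspace_mapply_Tact[symmetric] Tact_pow_in_Nmod)

lemma mcomp_in_Hspace: "m1 \<in> Hspace b c \<Longrightarrow> m2 \<in> Hspace a b \<Longrightarrow> mcomp b m1 m2 \<in> Hspace a c"
  unfolding Hspace_def aff_def Hidx_def mcomp_def
  by (auto intro!: sum.neutral)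

lemma mcomp_in_Mspace: "m1 \<in> Mspace b c \<Longrightarrow> m2 \<in> Mspace a b \<Longrightarrow> mcomp b m1 m2 \<in> Mspace a c"
  unfolding Mspace_def
  by (auto simp: mcomp_in_Hspace mapply_mcomp mapply_in_Nmod)

lemma Nmod_unit_expansion:
  assumes "w \<in> Nmod b"
  shows "(\<lambda>y. \<Sum>z\<in>bas b. w z * (if y = z then 1 else 0)) = w"
proof
  fix y
  have "(\<Sum>z\<in>bas b. w z * (if y = z then 1 else 0)) = (\<Sum>z\<in>bas b. if y = z then w z else 0)"
    by (rule sum.cong) auto
  also have "\<dots> = w y" using assms finite_bas[of b] unfolding Nmod_def by (cases y) auto
  finally show "(\<Sum>z\<in>bas b. w z * (if y = z then 1 else 0)) = w y" .
qed

text \<open>The columns of the inverse matrix are the preimages of the unit vectors; linearity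
  of the original map then identifies the whole inverse.\<close>
lemma inverse_matrix_exists:
  fixes m :: "(nat \<times> nat) \<times> (nat \<times> nat) \<Rightarrow> 'k::field"
  assumes bij: "bij_betw (mapply b m) (Nmod b) (Nmod b)"
  shows "\<exists>mi \<in> Hspace b b. \<forall>w\<in>Nmod b. mapply b mi w = inv_into (Nmod b) (mapply b m) w"
proof -
  let ?\<phi> = "mapply b m"
  let ?\<psi> = "inv_into (Nmod b) ?\<phi>"
  have inj: "inj_on ?\<phi> (Nmod b)" and img: "?\<phi> ` Nmod b = Nmod b"
    using bij by (auto simp: bij_betw_def)
  define e :: "nat \<times> nat \<Rightarrow> nat \<times> nat \<Rightarrow> 'k" where "e z = (\<lambda>y. if y = z then 1 else 0)" for z
  have e_in_Nmod: "z \<in> bas b \<Longrightarrow> e z \<in> Nmod b" for z by (auto simp: e_def Nmod_def)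
  have \<psi>_in_Nmod: "w \<in> Nmod b \<Longrightarrow> ?\<psi> w \<in> Nmod b" for w
    using img by (metis inv_into_into)
  have \<phi>_\<psi>: "w \<in> Nmod b \<Longrightarrow> ?\<phi> (?\<psi> w) = w" for w
    using img by (metis f_inv_into_f)
  define mi where "mi = (\<lambda>(y, z). if z \<in> bas b then ?\<psi> (e z) y else (0::'k))"
  have "mi \<in> Hspace b b"
    using \<psi>_in_Nmod[OF e_in_Nmod] by (auto simp: Hspace_def aff_def Hidx_def mi_def Nmod_def)
  moreover have "mapply b mi w = ?\<psi> w" if w: "w \<in> Nmod b" for w
  proof -
    define s where "s = (\<lambda>y. \<Sum>z\<in>bas b. w z * ?\<psi> (e z) y)"
    have "mapply b mi w = s"
      unfolding mapply_def s_def mi_def by (rule ext) (auto simp: mult.commute intro!: sum.cong)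
    moreover have "s \<in> Nmod b"
      using \<psi>_in_Nmod[OF e_in_Nmod] unfolding s_def Nmod_def by (auto intro!: sum.neutral)
    moreover have "?\<phi> s = w"
      unfolding s_def mapply_sum using \<phi>_\<psi>[OF e_in_Nmod] Nmod_unit_expansion[OF w]
      by (simp add: e_def cong: sum.cong)
    ultimately show ?thesis using inj by (metis inv_into_f_f)
  qed
  ultimately show ?thesis by blast
qed

lemma Aut_inverse:
  fixes h :: "(nat \<times> nat) \<times> (nat \<times> nat) \<Rightarrow> 'k::field"
  assumes h: "h \<in> Aut b"
  obtains hi where "hi \<in> Mspace b b"
    and "\<And>w. w \<in> Nmod b \<Longrightarrow> mapply b h (mapply b hi w) = w"
    and "\<And>u. u \<in> Nmod b \<Longrightarrow> mapply b hi (mapply b h u) = u"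
proof -
  let ?\<phi> = "mapply b h"
  have hM: "h \<in> Mspace b b" and bij: "bij_betw ?\<phi> (Nmod b) (Nmod b)"
    using h by (auto simp: Aut_def)
  have inj: "inj_on ?\<phi> (Nmod b)" and img: "?\<phi> ` Nmod b = Nmod b"
    using bij by (auto simp: bij_betw_def)
  obtain hi where hiH: "hi \<in> Hspace b b"
    and hi_inv: "\<And>w. w \<in> Nmod b \<Longrightarrow> mapply b hi w = inv_into (Nmod b) ?\<phi> w"
    using inverse_matrix_exists[OF bij] by blast
  have right_inv: "?\<phi> (mapply b hi w) = w" if "w \<in> Nmod b" for w
    using that img hi_inv by (metis f_inv_into_f)
  have left_inv: "mapply b hi (?\<phi> u) = u" if "u \<in> Nmod b" for u
    using that inj hi_inv Mspace_mapply_in_Nmod[OF hM] by (simp add: inv_into_f_f)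
  have "mapply b hi (Tact b v) = Tact b (mapply b hi v)" if v: "v \<in> Nmod b" for v
  proof -
    have "?\<phi> (Tact b (mapply b hi v)) = Tact b v"
      using v right_inv Mspace_mapply_Tact[OF hM] mapply_in_Nmod[OF hiH] by simp
    then have "Tact b (mapply b hi v) = mapply b hi (Tact b v)"
      using left_inv Tact_in_Nmod by metis
    then show ?thesis by simp
  qed
  with hiH have "hi \<in> Mspace b b" by (simp add: Mspace_def)
  with that right_inv left_inv show ?thesis by blast
qed

lemma quot_iso_image_Aut:
  fixes h :: "(nat \<times> nat) \<times> (nat \<times> nat) \<Rightarrow> 'k::field"
  assumes h: "h \<in> Aut b" and q: "quot_iso b W c"
  shows "quot_iso b (mapply b h ` W) c"
proof -
  obtain hi where hi: "hi \<in> Mspace b b"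
    and right_inv: "\<And>w. w \<in> Nmod b \<Longrightarrow> mapply b h (mapply b hi w) = w"
    and left_inv: "\<And>u. u \<in> Nmod b \<Longrightarrow> mapply b hi (mapply b h u) = u"
    using Aut_inverse[OF h] by blast
  have hM: "h \<in> Mspace b b" using h by (simp add: Aut_def)
  obtain p where p: "p \<in> Mspace b c" and p_onto: "mapply b p ` Nmod b = Nmod c"
    and p_ker: "{v \<in> Nmod b. mapply b p v = (\<lambda>_. 0)} = W"
    using q by (auto simp: quot_iso_def)
  note hi_in = Mspace_mapply_in_Nmod[OF hi] and h_in = Mspace_mapply_in_Nmod[OF hM]
  have "mapply b hi ` Nmod b = Nmod b"
    using hi_in left_inv h_in by (metis image_eqI subsetI subset_antisym image_subsetI)
  then have "mapply b (mcomp b p hi) ` Nmod b = Nmod c"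
    using p_onto by (simp add: mapply_mcomp image_image[symmetric])
  moreover have "{v \<in> Nmod b. mapply b (mcomp b p hi) v = (\<lambda>_. 0)} = mapply b h ` W"
  proof (intro equalityI subsetI)
    fix v assume "v \<in> {v \<in> Nmod b. mapply b (mcomp b p hi) v = (\<lambda>_. 0)}"
    then have v: "v \<in> Nmod b" "mapply b p (mapply b hi v) = (\<lambda>_. 0)"
      by (auto simp: mapply_mcomp)
    then have "mapply b hi v \<in> W" using p_ker hi_in by blast
    moreover have "v = mapply b h (mapply b hi v)" using right_inv v by simp
    ultimately show "v \<in> mapply b h ` W" by blast
  next
    fix v assume "v \<in> mapply b h ` W"
    then obtain u where "u \<in> Nmod b" "mapply b p u = (\<lambda>_. 0)" "v = mapply b h u"
      using p_ker by blast
    then show "v \<in> {v \<in> Nmod b. mapply b (mcomp b p hi) v = (\<lambda>_. 0)}"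
      using h_in left_inv by (simp add: mapply_mcomp)
  qed
  ultimately show ?thesis
    unfolding quot_iso_def using mcomp_in_Mspace[OF p hi] by blast
qed

lemma orbit_in_Mspace:
  "a' \<in> Aut a \<Longrightarrow> h \<in> Aut b \<Longrightarrow> f \<in> Mspace a b \<Longrightarrow> mcomp b h (mcomp a f a') \<in> Mspace a b"
  by (simp add: Aut_def mcomp_in_Mspace)

lemma orbit_image_Nmod:
  assumes "a' \<in> Aut a"
  shows "mapply a (mcomp b h (mcomp a f a')) ` Nmod a = mapply b h ` mapply a f ` Nmod a"
proof -
  have "mapply a (mcomp b h (mcomp a f a')) ` Nmod a = mapply b h ` mapply a f ` mapply a a' ` Nmod a"
    by (simp add: mapply_mcomp image_image)
  moreover have "mapply a a' ` Nmod a = Nmod a" using assms by (simp add: Aut_def bij_betw_def)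
  ultimately show ?thesis by simp
qed

lemma orbit_inj_on_Nmod:
  fixes f :: "(nat \<times> nat) \<times> (nat \<times> nat) \<Rightarrow> 'k::field"
  assumes a': "a' \<in> Aut a" and h: "h \<in> Aut b" and f: "f \<in> Mspace a b"
    and inj: "inj_on (mapply a f) (Nmod a)"
  shows "inj_on (mapply a (mcomp b h (mcomp a f a'))) (Nmod a)"
proof -
  have h_inj: "inj_on (mapply b h) (Nmod b)" and a'_inj: "inj_on (mapply a a') (Nmod a)"
    and a'_into: "mapply a a' ` Nmod a = Nmod a"
    using a' h by (auto simp: Aut_def bij_betw_def)
  have "inj_on (mapply a f \<circ> mapply a a') (Nmod a)"
    using a'_inj inj a'_into by (simp add: comp_inj_on)
  moreover have "inj_on (mapply b h) ((mapply a f \<circ> mapply a a') ` Nmod a)"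
    by (rule inj_on_subset[OF h_inj]) (auto simp: Mspace_mapply_in_Nmod[OF f])
  ultimately have "inj_on (mapply b h \<circ> (mapply a f \<circ> mapply a a')) (Nmod a)"
    by (rule comp_inj_on)
  moreover have "mapply a (mcomp b h (mcomp a f a')) = mapply b h \<circ> (mapply a f \<circ> mapply a a')"
    by (simp add: fun_eq_iff mapply_mcomp)
  ultimately show ?thesis by simp
qed

lemma orbit_subset_Vspace:
  assumes "f \<in> Vspace a c b"
  shows "orbit a b f \<subseteq> Vspace a c b"
proof
  fix F assume "F \<in> orbit a b f"
  then obtain a' h where a': "a' \<in> Aut a" and h: "h \<in> Aut b" and F: "F = mcomp b h (mcomp a f a')"
    unfolding orbit_def by blast
  have f: "f \<in> Mspace a b" "inj_on (mapply a f) (Nmod a)" "quot_iso b (mapply a f ` Nmod a) c"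
    using assms by (auto simp: Vspace_def)
  show "F \<in> Vspace a c b"
    using orbit_in_Mspace[OF a' h f(1)] orbit_inj_on_Nmod[OF a' h f(1,2)] quot_iso_image_Aut[OF h f(3)]
    by (simp add: Vspace_def F orbit_image_Nmod[OF a'])
qed

lemma orbit_subset_VGamma:
  assumes "f \<in> VGamma a c b G"
  shows "orbit a b f \<subseteq> VGamma a c b G"
proof
  fix F assume F_orbit: "F \<in> orbit a b f"
  then obtain a' h where a': "a' \<in> Aut a" and h: "h \<in> Aut b" and F: "F = mcomp b h (mcomp a f a')"
    unfolding orbit_def by blast
  have fV: "f \<in> Vspace a c b"
    and fG: "\<And>i. is_partition (G i) \<and> quot_iso b ((Tact b ^^ i) ` mapply a f ` Nmod a) (G i)"
    using assms by (auto simp: VGamma_def)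
  have hM: "h \<in> Mspace b b" using h by (simp add: Aut_def)
  have fM: "f \<in> Mspace a b" using fV by (simp add: Vspace_def)
  have "(Tact b ^^ i) ` mapply a F ` Nmod a = mapply b h ` (Tact b ^^ i) ` mapply a f ` Nmod a" for i
    unfolding F orbit_image_Nmod[OF a'] image_image
    using Mspace_mapply_Tact_pow[OF hM Mspace_mapply_in_Nmod[OF fM]] by simp
  then show "F \<in> VGamma a c b G"
    unfolding VGamma_def using orbit_subset_Vspace[OF fV] F_orbit fG quot_iso_image_Aut[OF h] by auto
qed

lemma deg_le_in_subspace_iff:
  assumes "orbit a b f \<subseteq> X" "orbit a b g \<subseteq> X" "X \<subseteq> Y"
  shows "deg_le_in a b X f g \<longleftrightarrow> deg_le_in a b Y f g"
proof -
  have "orbit a b f \<inter> X = orbit a b f" "orbit a b f \<inter> Y = orbit a b f"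
    using assms by blast+
  then show ?thesis
    using assms unfolding deg_le_in_def closure_of_subtopology by (auto simp: Int_commute)
qed

theorem lemma3p2:
  fixes \<alpha> \<beta> \<gamma> :: "nat list" and \<Gamma> :: "nat \<Rightarrow> nat list"
  assumes "is_partition \<alpha>" and "is_partition \<beta>" and "is_partition \<gamma>"
  shows "(\<forall>f g :: (nat \<times> nat) \<times> (nat \<times> nat) \<Rightarrow> 'k::alg_closed_field.
            f \<in> Vspace \<alpha> \<gamma> \<beta> \<and> g \<in> Vspace \<alpha> \<gamma> \<beta> \<longrightarrow>
            (deg_le_in \<alpha> \<beta> (Vspace \<alpha> \<gamma> \<beta>) f g \<longleftrightarrow> deg_le_in \<alpha> \<beta> (Mspace \<alpha> \<beta>) f g))
       \<and> (is_LR_tableau \<alpha> \<beta> \<gamma> \<Gamma> \<longrightarrow>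
         (\<forall>f g :: (nat \<times> nat) \<times> (nat \<times> nat) \<Rightarrow> 'k::alg_closed_field.
            f \<in> VGamma \<alpha> \<gamma> \<beta> \<Gamma> \<and> g \<in> VGamma \<alpha> \<gamma> \<beta> \<Gamma> \<longrightarrow>
            (deg_le_in \<alpha> \<beta> (VGamma \<alpha> \<gamma> \<beta> \<Gamma>) f g \<longleftrightarrow> deg_le_in \<alpha> \<beta> (Mspace \<alpha> \<beta>) f g)))"
proof -
  have V_M: "Vspace \<alpha> \<gamma> \<beta> \<subseteq> (Mspace \<alpha> \<beta> :: ((nat \<times> nat) \<times> (nat \<times> nat) \<Rightarrow> 'k) set)"
    by (auto simp: Vspace_def)
  have VGamma_M: "VGamma \<alpha> \<gamma> \<beta> \<Gamma> \<subseteq> (Mspace \<alpha> \<beta> :: ((nat \<times> nat) \<times> (nat \<times> nat) \<Rightarrow> 'k) set)"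
    using V_M by (auto simp: VGamma_def)
  show ?thesis
    using deg_le_in_subspace_iff[OF orbit_subset_Vspace orbit_subset_Vspace V_M]
      deg_le_in_subspace_iff[OF orbit_subset_VGamma orbit_subset_VGamma VGamma_M]
    by blast
qed

end
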